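(* Let $(\mathcal U,\mathcal F)$ be a strongly accessible set system satisfying the commutable property, let $P$ be a maximal solution and $w\in\mathcal U$. Let $S$ be a maximal solution that is not a root and satisfies $\mathrm{parent}'(S)=P$ and $\mathrm{pi}'(S)=w$. Then $w\notin P$, and there exist $R\in\mathrm{restr}(P,w)$ and $s\in R\cap Z$ with $s\neq w$ such that $$S=\mathrm{complete}'\big(\mathrm{complete}'(\{s\},R)|_w\cup\{w\},\ \mathcal U\big).$$
   Context: A set system is $(\mathcal U,\mathcal F)$ with $\mathcal U$ finite, $\mathcal F\subseteq 2^{\mathcal U}$, $\emptyset\in\mathcal F$; $S\in\mathcal F$ is maximal if no $Y\in\mathcal F$ has $S\subsetneq Y$. Strongly accessible: for all $X,Y\in\mathcal F$ with $X\subsetneq Y$ there is $z\in Y\setminus X$ with $X\cup\{z\}\in\mathcal F$. Commutable: for all $X,Y\in\mathcal F$ with $X\ne\emptyset$, $X\subsetneq Y$, $a,b\in Y\setminus X$, if $X\cup\{a\},X\cup\{b\}\in\mathcal F$ then $X\cup\{a,b\}\in\mathcal F$. Elements of $\mathcal U$ are distinct integers. $X^+_A=\{a\in A\setminus X: X\cup\{a\}\in\mathcal F\}$, $X^+=X^+_{\mathcal U}$. $Z=\{x:\{x\}\in\mathcal F\}$, $\mathrm{source}(X)=\min(X\cap Z)$. Layers: for $X\in\mathcal F$, $t\in X\cap Z$: $B_0=\{t\}$, $B_i=B_{i-1}\cup(B_{i-1}^+\cap X)$; for $y\in X\cup X^+$, $\mathrm{lay}^X_t(t)=0$ and for $y\ne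 t$, $\mathrm{lay}^X_t(y)=\min\{i\ge1:y\in B_{i-1}^+\}$; $\mathrm{lay}^X=\mathrm{lay}^X_{\mathrm{source}(X)}$. $\mathrm{choose}'(X,A)$ is the $y\in X^+_A$ minimizing $(\mathrm{lay}^X(y),y)$ lexicographically. $\mathrm{complete}'(X,A)$: while $X^+_A\neq\emptyset$, add $\mathrm{choose}'(X,A)$ to $X$; return $X$. The truncated version $\mathrm{complete}'(X,A)|_w$ runs the same loop but stops as soon as $\mathrm{choose}'(X,A)$ would return $w$, returning the current $X$ (so $w$ is not added). The layered canonical order of a nonempty maximal $S$: $s_1=\mathrm{source}(S)$, $s_{i+1}=\mathrm{choose}'(S[i],S)$ while $S[i]^+_S\ne\emptyset$, with $S[i]=\{s_1,\dots,s_i\}$. Let $j$ be the smallest index with $\mathrm{complete}'(S[j],\mathcal U)=S$; $S$ is a root if $j=1$; otherwise $\mathrm{pi}'(S)=s_j$, $\mathrm{core}'(S)=S[j-1]$ and $\mathrm{parent}'(S)=\mathrm{complete}'(\mathrm{core}'(S),\mathcal U)$. For a maximal solution $P$ and $w\in\mathcal U$, $\mathrm{restr}(P,w)$ is the set of all $R\in\mathcal F$ with $R\subseteq P\cup\{w\}$, $R\neq P$, that are maximal among members of $\mathcal F$ contained in $P\cup\{w\}$. *)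

theory Defs
  imports Main
begin

definition set_system :: "int set \<Rightarrow> int set set \<Rightarrow> bool" where
  "set_system U F \<longleftrightarrow> finite U \<and> F \<subseteq> Pow U \<and> {} \<in> F"

definition maximal :: "int set set \<Rightarrow> int set \<Rightarrow> bool" where
  "maximal F S \<longleftrightarrow> S \<in> F \<and> \<not> (\<exists>Y\<in>F. S \<subset> Y)"

definition strongly_accessible :: "int set set \<Rightarrow> bool" where
  "strongly_accessible F \<longleftrightarrow>
     (\<forall>X\<in>F. \<forall>Y\<in>F. X \<subset> Y \<longrightarrow> (\<exists>z\<in>Y - X. insert z X \<in> F))"

definition commutable :: "int set set \<Rightarrow> bool" where
  "commutable F \<longleftrightarrow>
     (\<forall>X\<in>F. \<forall>Y\<in>F. \<forall>a b. X \<noteq> {} \<and> X \<subset> Y \<and> a \<in> Y - X \<and> b \<in> Y - X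
        \<and> insert a X \<in> F \<and> insert b X \<in> F \<longrightarrow> insert a (insert b X) \<in> F)"

definition ext :: "int set set \<Rightarrow> int set \<Rightarrow> int set \<Rightarrow> int set" where
  "ext F A X = {a \<in> A - X. insert a X \<in> F}"

definition Zset :: "int set set \<Rightarrow> int set" where
  "Zset F = {x. {x} \<in> F}"

definition source :: "int set set \<Rightarrow> int set \<Rightarrow> int" where
  "source F X = Min (X \<inter> Zset F)"

fun layerB :: "int set \<Rightarrow> int set set \<Rightarrow> int set \<Rightarrow> int \<Rightarrow> nat \<Rightarrow> int set" where
  "layerB U F X t 0 = {t}"
| "layerB U F X t (Suc i) = layerB U F X t i \<union> (ext F U (layerB U F X t i) \<inter> X)"

definition lay_t :: "int set \<Rightarrow> int set set \<Rightarrow> int set \<Rightarrow> int \<Rightarrow> int \<Rightarrow> nat" where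
  "lay_t U F X t y = (if y = t then 0
      else (LEAST i. 1 \<le> i \<and> y \<in> ext F U (layerB U F X t (i - 1))))"

definition lay :: "int set \<Rightarrow> int set set \<Rightarrow> int set \<Rightarrow> int \<Rightarrow> nat" where
  "lay U F X y = lay_t U F X (source F X) y"

definition choose' :: "int set \<Rightarrow> int set set \<Rightarrow> int set \<Rightarrow> int set \<Rightarrow> int" where
  "choose' U F X A = (SOME y. y \<in> ext F A X \<and>
      (\<forall>z\<in>ext F A X. lay U F X y < lay U F X z \<or> (lay U F X y = lay U F X z \<and> y \<le> z)))"

(* the loop of complete', with fuel; each iteration adds a new element of U,
   so card U iterations always suffice to reach termination *)
fun compl_it :: "int set \<Rightarrow> int set set \<Rightarrow> int set \<Rightarrow> nat \<Rightarrow> int set \<Rightarrow> int set" where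
  "compl_it U F A 0 X = X"
| "compl_it U F A (Suc n) X =
     (if ext F A X = {} then X else compl_it U F A n (insert (choose' U F X A) X))"

definition complete' :: "int set \<Rightarrow> int set set \<Rightarrow> int set \<Rightarrow> int set \<Rightarrow> int set" where
  "complete' U F X A = compl_it U F A (card U) X"

fun compl_tr_it :: "int set \<Rightarrow> int set set \<Rightarrow> int set \<Rightarrow> int \<Rightarrow> nat \<Rightarrow> int set \<Rightarrow> int set" where
  "compl_tr_it U F A w 0 X = X"
| "compl_tr_it U F A w (Suc n) X =
     (if ext F A X = {} then X
      else if choose' U F X A = w then X
      else compl_tr_it U F A w n (insert (choose' U F X A) X))"

definition complete_trunc :: "int set \<Rightarrow> int set set \<Rightarrow> int set \<Rightarrow> int set \<Rightarrow> int \<Rightarrow> int set" where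
  "complete_trunc U F X A w = compl_tr_it U F A w (card U) X"

(* prefixes S[i] of the layered canonical order of S (meaningful for 1 <= i <= |S|) *)
fun canon_prefix :: "int set \<Rightarrow> int set set \<Rightarrow> int set \<Rightarrow> nat \<Rightarrow> int set" where
  "canon_prefix U F S 0 = {}"
| "canon_prefix U F S (Suc 0) = {source F S}"
| "canon_prefix U F S (Suc (Suc i)) =
     insert (choose' U F (canon_prefix U F S (Suc i)) S) (canon_prefix U F S (Suc i))"

definition canon_elem :: "int set \<Rightarrow> int set set \<Rightarrow> int set \<Rightarrow> nat \<Rightarrow> int" where
  "canon_elem U F S i = (if i = 1 then source F S else choose' U F (canon_prefix U F S (i - 1)) S)"

definition canon_j :: "int set \<Rightarrow> int set set \<Rightarrow> int set \<Rightarrow> nat" where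
  "canon_j U F S = (LEAST j. 1 \<le> j \<and> j \<le> card S \<and> complete' U F (canon_prefix U F S j) U = S)"

definition is_root :: "int set \<Rightarrow> int set set \<Rightarrow> int set \<Rightarrow> bool" where
  "is_root U F S \<longleftrightarrow> canon_j U F S = 1"

definition pi' :: "int set \<Rightarrow> int set set \<Rightarrow> int set \<Rightarrow> int" where
  "pi' U F S = canon_elem U F S (canon_j U F S)"

definition core' :: "int set \<Rightarrow> int set set \<Rightarrow> int set \<Rightarrow> int set" where
  "core' U F S = canon_prefix U F S (canon_j U F S - 1)"

definition parent' :: "int set \<Rightarrow> int set set \<Rightarrow> int set \<Rightarrow> int set" where
  "parent' U F S = complete' U F (core' U F S) U"

definition restr :: "int set set \<Rightarrow> int set \<Rightarrow> int \<Rightarrow> int set set" where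
  "restr F P w = {R \<in> F. R \<subseteq> insert w P \<and> R \<noteq> P \<and>
      \<not> (\<exists>Y\<in>F. Y \<subseteq> insert w P \<and> R \<subset> Y)}"

end

theory Submission
  imports Defs "HOL-Library.Product_Lexorder"
begin

text \<open>
  Order candidates by the key (lay, element). Along the canonical order of S these keys are
  non-decreasing, and the key of an element outside S can only decrease as the prefix grows.
  Since completing S[j] inside U never leaves S, no element outside S beats the canonical
  choice at an earlier step. Hence P = complete'(S[j-1]) begins with an element c outside S;
  if w were in P, commutability would put c next to w on top of S[j-1], contradicting the
  previous sentence. For the same reason choose' restricted to any feasible R containing S[j]
  reproduces s_1, ..., s_(j-1) and then proposes w, so the truncated completion of {s_1} in
  a maximal feasible R inside P \<union> {w} is exactly S[j-1].
\<close>

locale accessible_commutable =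
  fixes U :: "int set" and F :: "int set set"
  assumes finite_U: "finite U" and F_Pow: "F \<subseteq> Pow U" and empty_F: "{} \<in> F"
    and strongly_accessible: "strongly_accessible F" and commutable: "commutable F"
begin

lemma ext_iff: "a \<in> ext F A X \<longleftrightarrow> a \<in> A \<and> a \<notin> X \<and> insert a X \<in> F"
  by (auto simp: ext_def)

lemma feasible_subset_U: "X \<in> F \<Longrightarrow> X \<subseteq> U"
  using F_Pow by auto

lemma finite_feasible: "X \<in> F \<Longrightarrow> finite X"
  using feasible_subset_U finite_U finite_subset by blast

lemma finite_ext: "A \<subseteq> U \<Longrightarrow> finite (ext F A X)"
  using finite_U unfolding ext_def by (auto intro: finite_subset)

lemma strongly_accessibleD:
  "X \<in> F \<Longrightarrow> Y \<in> F \<Longrightarrow> X \<subset> Y \<Longrightarrow> \<exists>z\<in>Y - X. insert z X \<in> F"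
  using strongly_accessible unfolding strongly_accessible_def by blast

lemma commutableD:
  "X \<in> F \<Longrightarrow> Y \<in> F \<Longrightarrow> X \<noteq> {} \<Longrightarrow> X \<subset> Y \<Longrightarrow> a \<in> Y - X \<Longrightarrow> b \<in> Y - X
   \<Longrightarrow> insert a X \<in> F \<Longrightarrow> insert b X \<in> F \<Longrightarrow> insert a (insert b X) \<in> F"
  using commutable unfolding commutable_def by blast

text \<open>Climb from Z to Z' one strongly-accessible step at a time, commuting y along.\<close>

lemma insert_feasible_lift:
  assumes "Z \<subseteq> Z'" "Z \<in> F" "Z' \<in> F" "Z \<noteq> {}" "insert y Z \<in> F" "y \<notin> Z'"
    "insert y Z' \<subseteq> Y" "Y \<in> F"
  shows "insert y Z' \<in> F"
  using assms
proof (induction "card (Z' - Z)" arbitrary: Z rule: less_induct)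
  case less
  show ?case
  proof (cases "Z = Z'")
    case True
    then show ?thesis using less by simp
  next
    case False
    then have "Z \<subset> Z'" using less by auto
    then obtain z where z: "z \<in> Z' - Z" "insert z Z \<in> F"
      using strongly_accessibleD less(3,4) by blast
    have "insert z (insert y Z) \<in> F"
      by (rule commutableD[of Z Y]) (use less(2-9) z in auto)
    then have yzZ: "insert y (insert z Z) \<in> F" by (simp add: insert_commute)
    have "card (Z' - insert z Z) < card (Z' - Z)"
      using z finite_feasible[OF less(4)] by (metis Diff_insert card_Diff1_less finite_Diff)
    then show ?thesis
      by (rule less(1)) (use less(2-9) z yzZ in auto)
  qed
qed

subsection \<open>Layers\<close>

abbreviation B where "B X t k \<equiv> layerB U F X t k"
abbreviation L where "L X t y \<equiv> lay_t U F X t y"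

lemma layerB_props:
  assumes X: "X \<in> F" and t: "t \<in> X" "{t} \<in> F"
  shows "B X t k \<in> F \<and> B X t k \<subseteq> X \<and> t \<in> B X t k"
proof (induction k)
  case 0
  then show ?case using t by simp
next
  case (Suc k)
  let ?E = "ext F U (B X t k) \<inter> X"
  have "B X t k \<union> E \<in> F" if "E \<subseteq> ?E" for E
  proof -
    have "finite E" using that finite_ext finite_subset by blast
    then show ?thesis using that
    proof (induction E rule: finite_induct)
      case empty
      then show ?case using Suc by simp
    next
      case (insert a E)
      have "insert a (B X t k \<union> E) \<in> F"
        by (rule insert_feasible_lift[of "B X t k" _ _ X]) (use Suc insert X in \<open>auto simp: ext_iff\<close>)
      then show ?case by simp
    qed
  qed
  then have "B X t (Suc k) \<in> F" by simp
  then show ?case using Suc by auto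
qed

lemma layerB_mono:
  assumes X: "X \<in> F" "X' \<in> F" "X \<subseteq> X'" and t: "t \<in> X" "{t} \<in> F"
  shows "B X t k \<subseteq> B X' t k"
proof (induction k)
  case 0
  then show ?case by simp
next
  case (Suc k)
  have p: "B X t k \<in> F" "B X t k \<subseteq> X" "t \<in> B X t k"
    and p': "B X' t k \<in> F" "B X' t k \<subseteq> X'"
    using layerB_props X t by auto
  show ?case
  proof
    fix a assume "a \<in> B X t (Suc k)"
    then consider "a \<in> B X t k" | "a \<in> ext F U (B X t k)" "a \<in> X" by auto
    then show "a \<in> B X' t (Suc k)"
    proof cases
      case 1
      then show ?thesis using Suc by auto
    next
      case 2
      show ?thesis
      proof (cases "a \<in> B X' t k")
        case False
        have "insert a (B X' t k) \<in> F"
          by (rule insert_feasible_lift[of "B X t k" _ _ X']) (use Suc p p' 2 False X in \<open>auto simp: ext_iff\<close>)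
        then have "a \<in> ext F U (B X' t k)"
          using False 2 X feasible_subset_U by (auto simp: ext_iff)
        then show ?thesis using 2 X by auto
      qed simp
    qed
  qed
qed

lemma layerB_card_eq:
  assumes X: "X \<in> F" and t: "t \<in> X" "{t} \<in> F"
  shows "B X t (card X) = X"
proof -
  have fX: "finite X" using finite_feasible X by auto
  have grows: "B X t k = X \<or> k + 1 \<le> card (B X t k)" for k
  proof (induction k)
    case 0
    then show ?case by simp
  next
    case (Suc k)
    have p: "B X t k \<in> F" "B X t k \<subseteq> X" using layerB_props X t by auto
    show ?case
    proof (cases "B X t k = X")
      case False
      then have "B X t k \<subset> X" using p by auto
      then obtain z where z: "z \<in> X - B X t k" "insert z (B X t k) \<in> F"
        using strongly_accessibleD p X by blast
      then have "z \<in> ext F U (B X t k)" using X feasible_subset_U by (auto simp: ext_iff)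
      then have "insert z (B X t k) \<subseteq> B X t (Suc k)" using z by auto
      moreover have "finite (B X t (Suc k))"
        using layerB_props[OF X t, of "Suc k"] fX finite_subset by blast
      ultimately have "card (insert z (B X t k)) \<le> card (B X t (Suc k))" by (rule card_mono[rotated])
      moreover have "card (insert z (B X t k)) = card (B X t k) + 1"
        using z p fX finite_subset by fastforce
      ultimately show ?thesis using Suc False by auto
    qed auto
  qed
  have "card (B X t (card X)) \<le> card X"
    using layerB_props[OF X t] fX card_mono by blast
  then show ?thesis using grows[of "card X"] by auto
qed

lemma lay_t_props:
  assumes X: "X \<in> F" and t: "t \<in> X" "{t} \<in> F" and y: "y \<in> ext F U X"
  shows "1 \<le> L X t y" "y \<in> ext F U (B X t (L X t y - 1))"
    "\<And>i. 1 \<le> i \<Longrightarrow> y \<in> ext F U (B X t (i - 1)) \<Longrightarrow> L X t y \<le> i"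
proof -
  have "y \<noteq> t" using y t by (auto simp: ext_iff)
  then have eq: "L X t y = (LEAST i. 1 \<le> i \<and> y \<in> ext F U (B X t (i - 1)))"
    by (simp add: lay_t_def)
  have "1 \<le> card X + 1 \<and> y \<in> ext F U (B X t (card X + 1 - 1))"
    using layerB_card_eq[OF X t] y by simp
  then show "1 \<le> L X t y" "y \<in> ext F U (B X t (L X t y - 1))"
    unfolding eq using LeastI[of "\<lambda>i. 1 \<le> i \<and> y \<in> ext F U (B X t (i - 1))"] by blast+
  show "\<And>i. 1 \<le> i \<Longrightarrow> y \<in> ext F U (B X t (i - 1)) \<Longrightarrow> L X t y \<le> i"
    unfolding eq by (simp add: Least_le)
qed

lemma lay_t_antimono:
  assumes X: "X \<in> F" "X' \<in> F" "X \<subseteq> X'" and t: "t \<in> X" "{t} \<in> F"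
    and y: "y \<in> ext F U X" "y \<in> ext F U X'"
  shows "L X' t y \<le> L X t y"
proof -
  let ?l = "L X t y"
  have l: "1 \<le> ?l" "y \<in> ext F U (B X t (?l - 1))" using lay_t_props[OF X(1) t y(1)] by auto
  have p: "B X t (?l-1) \<in> F" "B X t (?l-1) \<subseteq> X" "t \<in> B X t (?l-1)"
    and p': "B X' t (?l-1) \<in> F" "B X' t (?l-1) \<subseteq> X'"
    using layerB_props X t by auto
  have "B X t (?l-1) \<subseteq> B X' t (?l-1)" using layerB_mono X t by blast
  then have "insert y (B X' t (?l-1)) \<in> F"
    by (rule insert_feasible_lift[of "B X t (?l-1)" _ _ "insert y X'"])
      (use l p p' y in \<open>auto simp: ext_iff\<close>)
  then have "y \<in> ext F U (B X' t (?l - 1))" using y p' by (auto simp: ext_iff)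
  then show ?thesis using lay_t_props(3)[OF X(2) _ t(2) y(2)] l X t by auto
qed

lemma layerB_insert_below_lay:
  assumes X: "X \<in> F" and t: "t \<in> X" "{t} \<in> F" and a: "a \<in> ext F U X"
  shows "k < L X t a \<Longrightarrow> B (insert a X) t k = B X t k"
proof (induction k)
  case 0
  then show ?case by simp
next
  case (Suc k)
  have "a \<notin> ext F U (B X t k)"
    using lay_t_props(3)[OF X t a, of "Suc k"] Suc.prems by auto
  then have "ext F U (B X t k) \<inter> insert a X = ext F U (B X t k) \<inter> X" by auto
  then show ?case using Suc by simp
qed

text \<open>
  If a had the smallest key at X, then after adding a every candidate still has key at least
  that of a: a candidate whose layer did not grow was already a candidate at X.
\<close>

lemma lay_key_insert_mono:
  assumes X: "X \<in> F" and t: "t \<in> X" "{t} \<in> F" and a: "a \<in> ext F U X"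
    and b: "b \<in> ext F U (insert a X)"
    and a_min: "b \<in> ext F U X \<Longrightarrow> (L X t a, a) \<le> (L X t b, b)"
  shows "(L X t a, a) \<le> (L (insert a X) t b, b)"
proof (cases "L X t a < L (insert a X) t b")
  case False
  let ?X' = "insert a X" and ?q = "L (insert a X) t b"
  have X': "?X' \<in> F" using a by (auto simp: ext_iff)
  have q: "1 \<le> ?q" "b \<in> ext F U (B ?X' t (?q - 1))" using lay_t_props[OF X' _ t(2) b] t by auto
  have Bq: "B ?X' t (?q - 1) = B X t (?q - 1)"
    using layerB_insert_below_lay[OF X t a] False q by simp
  have p: "B X t (?q-1) \<in> F" "B X t (?q-1) \<subseteq> X" "t \<in> B X t (?q-1)" using layerB_props X t by auto
  have "insert b X \<in> F"
    by (rule insert_feasible_lift[of "B X t (?q-1)" _ _ "insert b ?X'"]) (use q Bq p b X in \<open>auto simp: ext_iff\<close>)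
  then have bX: "b \<in> ext F U X" using b by (auto simp: ext_iff)
  let ?r = "L X t b"
  have r: "1 \<le> ?r" "b \<in> ext F U (B X t (?r - 1))" using lay_t_props[OF X t bX] by auto
  have "?r \<le> ?q" using lay_t_props(3)[OF X t bX] q Bq by auto
  moreover have "B ?X' t (?r - 1) = B X t (?r - 1)"
    using layerB_insert_below_lay[OF X t a] False r \<open>?r \<le> ?q\<close> by simp
  then have "?q \<le> ?r" using lay_t_props(3)[OF X' _ t(2) b] t r by auto
  ultimately show ?thesis using a_min[OF bX] by simp
qed (simp add: less_eq_prod_def)

subsection \<open>The choice function and completion\<close>

definition lay_key :: "int set \<Rightarrow> int \<Rightarrow> nat \<times> int" where
  "lay_key X y = (lay U F X y, y)"

lemma lay_key_eq: "lay_key X y \<le> lay_key X z \<Longrightarrow> lay_key X z \<le> lay_key X y \<Longrightarrow> y = z"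
  by (auto simp: lay_key_def less_eq_prod_def)

lemma choose'_props:
  assumes "A \<subseteq> U" "ext F A X \<noteq> {}"
  shows "choose' U F X A \<in> ext F A X" "\<And>z. z \<in> ext F A X \<Longrightarrow> lay_key X (choose' U F X A) \<le> lay_key X z"
proof -
  let ?E = "ext F A X"
  have "finite ?E" using finite_ext assms by blast
  then have "Min (lay_key X ` ?E) \<in> lay_key X ` ?E" using assms by (intro Min_in) auto
  then obtain y where "y \<in> ?E" "lay_key X y = Min (lay_key X ` ?E)" by auto
  with \<open>finite ?E\<close> have y: "y \<in> ?E" "\<forall>z\<in>?E. lay_key X y \<le> lay_key X z" by auto
  then have "\<exists>y. y \<in> ?E \<and> (\<forall>z\<in>?E. lay U F X y < lay U F X z \<or> (lay U F X y = lay U F X z \<and> y \<le> z))"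
    unfolding lay_key_def less_eq_prod_def by (intro exI[of _ y]) auto
  then have "choose' U F X A \<in> ?E \<and> (\<forall>z\<in>?E. lay U F X (choose' U F X A) < lay U F X z \<or>
      (lay U F X (choose' U F X A) = lay U F X z \<and> choose' U F X A \<le> z))"
    unfolding choose'_def by (rule someI_ex)
  then show "choose' U F X A \<in> ?E" "\<And>z. z \<in> ?E \<Longrightarrow> lay_key X (choose' U F X A) \<le> lay_key X z"
    by (auto simp: lay_key_def less_eq_prod_def)
qed

lemma compl_it_superset: "X \<subseteq> compl_it U F A n X"
proof (induction n arbitrary: X)
  case (Suc n)
  show ?case using Suc.IH[of "insert (choose' U F X A) X"] by auto
qed simp

lemma compl_it_feasible: "A \<subseteq> U \<Longrightarrow> X \<in> F \<Longrightarrow> compl_it U F A n X \<in> F"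
proof (induction n arbitrary: X)
  case (Suc n)
  then show ?case using choose'_props(1)[OF Suc(2)] by (auto simp: ext_iff)
qed simp

lemma card_diff_insert_choose':
  assumes "A \<subseteq> U" "ext F A X \<noteq> {}"
  shows "card (A - insert (choose' U F X A) X) < card (A - X)"
proof -
  let ?c = "choose' U F X A"
  have "?c \<in> A" "?c \<notin> X" using choose'_props(1)[OF assms] by (auto simp: ext_iff)
  moreover have "finite A" using assms finite_U finite_subset by blast
  ultimately have "card ((A - X) - {?c}) < card (A - X)" by (intro card_Diff1_less) auto
  moreover have "A - insert ?c X = (A - X) - {?c}" by auto
  ultimately show ?thesis by simp
qed

lemma compl_it_Suc_stable:
  "A \<subseteq> U \<Longrightarrow> card (A - X) \<le> n \<Longrightarrow> compl_it U F A (Suc n) X = compl_it U F A n X"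
proof (induction n arbitrary: X)
  case 0
  have "finite (A - X)" using 0 finite_U finite_subset by blast
  then have "ext F A X = {}" using 0 by (auto simp: ext_def)
  then show ?case by simp
next
  case (Suc n)
  show ?case
  proof (cases "ext F A X = {}")
    case False
    then show ?thesis
      using Suc card_diff_insert_choose'[OF Suc(2) False] by simp
  qed simp
qed

lemma complete'_step:
  assumes A: "A \<subseteq> U" and ne: "ext F A X \<noteq> {}"
  shows "complete' U F X A = complete' U F (insert (choose' U F X A) X) A"
proof -
  let ?c = "choose' U F X A"
  have "A - X \<subseteq> U" using A by auto
  then have "card (A - X) \<le> card U" using finite_U card_mono by blast
  moreover have "card (A - insert ?c X) < card (A - X)" using card_diff_insert_choose'[OF A ne] .
  ultimately obtain n where n: "card U = Suc n" "card (A - insert ?c X) \<le> n"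
    by (cases "card U") auto
  have "complete' U F X A = compl_it U F A n (insert ?c X)"
    unfolding complete'_def n using ne by simp
  also have "\<dots> = compl_it U F A (Suc n) (insert ?c X)"
    using compl_it_Suc_stable[OF A n(2)] by simp
  finally show ?thesis unfolding complete'_def n .
qed

lemma complete'_fixpoint: "ext F A X = {} \<Longrightarrow> complete' U F X A = X"
  unfolding complete'_def by (cases "card U") auto

lemma restr_exists_superset:
  assumes w: "w \<notin> P" and X: "X \<in> F" "w \<in> X" "X \<subseteq> insert w P"
  shows "\<exists>R\<in>restr F P w. X \<subseteq> R"
proof -
  define Fam where "Fam = {Y \<in> F. X \<subseteq> Y \<and> Y \<subseteq> insert w P}"
  have "Fam \<subseteq> Pow U" using F_Pow Fam_def by auto
  then have "finite Fam" using finite_U by (meson finite_Pow_iff finite_subset)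
  moreover have "X \<in> Fam" using X Fam_def by auto
  ultimately obtain R where R: "R \<in> Fam" "\<forall>Y\<in>Fam. R \<subseteq> Y \<longrightarrow> R = Y"
    using finite_has_maximal by blast
  have "\<not> (\<exists>Y\<in>F. Y \<subseteq> insert w P \<and> R \<subset> Y)"
  proof
    assume "\<exists>Y\<in>F. Y \<subseteq> insert w P \<and> R \<subset> Y"
    then obtain Y where "Y \<in> F" "Y \<subseteq> insert w P" "R \<subset> Y" by blast
    then show False using R unfolding Fam_def by auto
  qed
  moreover have "R \<in> F" "X \<subseteq> R" "R \<subseteq> insert w P" using R(1) Fam_def by auto
  ultimately show ?thesis using X w unfolding restr_def by auto
qed

end

subsection \<open>The layered canonical order\<close>

locale canonical_order = accessible_commutable +
  fixes S :: "int set"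
  assumes maximal_S: "maximal F S" and S_nonempty: "S \<noteq> {}"
begin

abbreviation src where "src \<equiv> source F S"
abbreviation pfx where "pfx i \<equiv> canon_prefix U F S i"
abbreviation nxt where "nxt i \<equiv> choose' U F (pfx i) S"

lemma S_feasible: "S \<in> F"
  using maximal_S by (simp add: maximal_def)

lemma S_subset_U: "S \<subseteq> U"
  using S_feasible feasible_subset_U by blast

lemma finite_S: "finite S"
  using S_feasible finite_feasible by blast

lemma card_S_pos: "1 \<le> card S"
  using S_nonempty finite_S by (simp add: Suc_leI card_gt_0_iff)

lemma ext_S_empty: "ext F U S = {}"
proof -
  have "insert a S \<notin> F" if "a \<notin> S" for a
    using maximal_S that unfolding maximal_def by blast
  then show ?thesis by (auto simp: ext_iff)
qed

lemma src_props: "src \<in> S" "{src} \<in> F" "src \<in> Zset F"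
proof -
  obtain z where "z \<in> S" "insert z {} \<in> F"
    using strongly_accessibleD[OF empty_F S_feasible] S_nonempty by blast
  then have "S \<inter> Zset F \<noteq> {}" by (auto simp: Zset_def)
  then have "src \<in> S \<inter> Zset F"
    unfolding source_def using finite_S by (intro Min_in) auto
  then show "src \<in> S" "{src} \<in> F" "src \<in> Zset F" by (auto simp: Zset_def)
qed

lemma src_le: "x \<in> S \<Longrightarrow> x \<in> Zset F \<Longrightarrow> src \<le> x"
  unfolding source_def using finite_S by simp

lemma pfx_Suc: "1 \<le> i \<Longrightarrow> pfx (Suc i) = insert (nxt i) (pfx i)"
  by (cases i) auto

lemma ext_S_pfx_nonempty:
  assumes "pfx i \<in> F" "pfx i \<subseteq> S" "card (pfx i) < card S"
  shows "ext F S (pfx i) \<noteq> {}"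
proof -
  have "pfx i \<subset> S" using assms by auto
  then show ?thesis
    using strongly_accessibleD[OF assms(1) S_feasible] by (auto simp: ext_iff)
qed

lemma pfx_props:
  "1 \<le> i \<Longrightarrow> i \<le> card S \<Longrightarrow> pfx i \<in> F \<and> pfx i \<subseteq> S \<and> src \<in> pfx i \<and> card (pfx i) = i"
proof (induction i)
  case (Suc i)
  show ?case
  proof (cases "i = 0")
    case True
    then show ?thesis using src_props by simp
  next
    case False
    then have IH: "pfx i \<in> F" "pfx i \<subseteq> S" "src \<in> pfx i" "card (pfx i) = i" using Suc by auto
    then have "nxt i \<in> ext F S (pfx i)"
      using choose'_props(1)[OF S_subset_U ext_S_pfx_nonempty] Suc.prems by auto
    moreover have "finite (pfx i)" using IH finite_S finite_subset by blast
    ultimately show ?thesis using IH pfx_Suc False by (auto simp: ext_iff)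
  qed
qed simp

lemma pfx_mono: "1 \<le> i \<Longrightarrow> i \<le> m \<Longrightarrow> pfx i \<subseteq> pfx m"
proof (induction m)
  case (Suc m)
  then show ?case using pfx_Suc[of m] by (cases "i = Suc m") auto
qed simp

lemma pfx_card_S: "pfx (card S) = S"
  using pfx_props[OF card_S_pos] finite_S by (simp add: card_subset_eq)

lemma source_pfx: "1 \<le> i \<Longrightarrow> i \<le> card S \<Longrightarrow> source F (pfx i) = src"
proof -
  assume i: "1 \<le> i" "i \<le> card S"
  have p: "pfx i \<subseteq> S" "src \<in> pfx i" using pfx_props[OF i] by auto
  then have "finite (pfx i \<inter> Zset F)" using finite_S finite_subset by blast
  then show ?thesis
    unfolding source_def[of _ "pfx i"] by (rule Min_eqI) (use p src_props src_le in auto)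
qed

lemma lay_key_pfx: "1 \<le> i \<Longrightarrow> i \<le> card S \<Longrightarrow> lay_key (pfx i) y = (L (pfx i) src y, y)"
  using source_pfx by (simp add: lay_key_def lay_def)

lemma nxt_props:
  assumes "1 \<le> i" "i < card S"
  shows "nxt i \<in> ext F S (pfx i)" "\<And>z. z \<in> ext F S (pfx i) \<Longrightarrow> lay_key (pfx i) (nxt i) \<le> lay_key (pfx i) z"
  using choose'_props[OF S_subset_U ext_S_pfx_nonempty] pfx_props[of i] assms by auto

lemma lay_key_nxt_mono:
  "1 \<le> i \<Longrightarrow> i \<le> m \<Longrightarrow> m < card S \<Longrightarrow> lay_key (pfx i) (nxt i) \<le> lay_key (pfx m) (nxt m)"
proof (induction m)
  case (Suc m)
  show ?case
  proof (cases "i = Suc m")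
    case False
    then have m: "1 \<le> m" "i \<le> m" "m < card S" using Suc by auto
    have pm: "pfx m \<in> F" "src \<in> pfx m" using pfx_props[of m] m by auto
    have eq: "pfx (Suc m) = insert (nxt m) (pfx m)" using pfx_Suc m by simp
    have nb: "nxt (Suc m) \<in> ext F S (pfx (Suc m))" using nxt_props(1)[of "Suc m"] Suc.prems by auto
    have "(L (pfx m) src (nxt m), nxt m) \<le> (L (insert (nxt m) (pfx m)) src (nxt (Suc m)), nxt (Suc m))"
    proof (rule lay_key_insert_mono[OF pm src_props(2)])
      show "nxt m \<in> ext F U (pfx m)" using nxt_props(1)[OF m(1,3)] S_subset_U by (auto simp: ext_iff)
      show "nxt (Suc m) \<in> ext F U (insert (nxt m) (pfx m))" using nb S_subset_U eq by (auto simp: ext_iff)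
      assume "nxt (Suc m) \<in> ext F U (pfx m)"
      then have "nxt (Suc m) \<in> ext F S (pfx m)" using nb by (auto simp: ext_iff)
      then show "(L (pfx m) src (nxt m), nxt m) \<le> (L (pfx m) src (nxt (Suc m)), nxt (Suc m))"
        using nxt_props(2)[OF m(1,3)] lay_key_pfx[of m] m by auto
    qed
    then have "lay_key (pfx m) (nxt m) \<le> lay_key (pfx (Suc m)) (nxt (Suc m))"
      using lay_key_pfx[of m] lay_key_pfx[of "Suc m"] m Suc.prems eq by auto
    then show ?thesis using Suc m by auto
  qed simp
qed simp

text \<open>
  Otherwise key_j(y) \<le> key_i(y) < key_i(s_(i+1)) \<le> key_j(s_(j+1)), so y would beat every
  candidate from S at S[j]; but choose' on U at S[j] picks an element of S, as complete'(S[j]) = S.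
\<close>

lemma lay_key_nxt_le_outside:
  assumes i: "1 \<le> i" "i < j" and j: "j \<le> card S" and complete_j: "complete' U F (pfx j) U = S"
    and y: "y \<notin> S" "y \<in> ext F U (pfx i)" "y \<in> ext F U (pfx j)"
  shows "lay_key (pfx i) (nxt i) \<le> lay_key (pfx i) y"
proof (rule ccontr)
  assume "\<not> ?thesis"
  then have lt: "lay_key (pfx i) y < lay_key (pfx i) (nxt i)" by simp
  have pi: "pfx i \<in> F" "src \<in> pfx i" and pj: "pfx j \<in> F" using pfx_props i j by auto
  have "L (pfx j) src y \<le> L (pfx i) src y"
    using lay_t_antimono[OF pi(1) pj pfx_mono pi(2) src_props(2) y(2,3)] i by simp
  then have y_ji: "lay_key (pfx j) y \<le> lay_key (pfx i) y"
    using lay_key_pfx[of i] lay_key_pfx[of j] i j by (auto simp: less_eq_prod_def)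
  have j_lt: "j < card S" using y(3) ext_S_empty pfx_card_S j by (cases "j = card S") auto
  have ne: "ext F U (pfx j) \<noteq> {}" using y by auto
  let ?c = "choose' U F (pfx j) U"
  have c: "?c \<in> ext F U (pfx j)" "lay_key (pfx j) ?c \<le> lay_key (pfx j) y"
    using choose'_props[OF _ ne] y by auto
  have "?c \<in> complete' U F (insert ?c (pfx j)) U"
    using compl_it_superset unfolding complete'_def by blast
  then have "?c \<in> S" using complete'_step[OF _ ne] complete_j by simp
  then have "lay_key (pfx j) (nxt j) \<le> lay_key (pfx j) ?c"
    using c nxt_props(2)[of j] i j_lt by (auto simp: ext_iff)
  then show False using c y_ji lt lay_key_nxt_mono[OF i(1) _ j_lt] i by simp
qed

lemma canon_j_props:
  "1 \<le> canon_j U F S" "canon_j U F S \<le> card S" "complete' U F (pfx (canon_j U F S)) U = S"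
proof -
  have "1 \<le> card S \<and> card S \<le> card S \<and> complete' U F (pfx (card S)) U = S"
    using card_S_pos pfx_card_S complete'_fixpoint[OF ext_S_empty] by simp
  then show "1 \<le> canon_j U F S" "canon_j U F S \<le> card S" "complete' U F (pfx (canon_j U F S)) U = S"
    unfolding canon_j_def by (metis (mono_tags, lifting) LeastI)+
qed

lemma complete_pfx_below_canon_j: "1 \<le> k \<Longrightarrow> k < canon_j U F S \<Longrightarrow> complete' U F (pfx k) U \<noteq> S"
  using canon_j_props(2) not_less_Least unfolding canon_j_def by fastforce

lemma nxt_notin_complete_pfx:
  assumes k: "1 \<le> k" "Suc k \<le> card S" and complete_Suc: "complete' U F (pfx (Suc k)) U = S"
    and complete_k: "complete' U F (pfx k) U \<noteq> S"
  shows "nxt k \<notin> complete' U F (pfx k) U"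
proof
  let ?w = "nxt k" and ?P = "complete' U F (pfx k) U" and ?c = "choose' U F (pfx k) U"
  assume w_P: "?w \<in> ?P"
  have pk: "pfx k \<in> F" "src \<in> pfx k" using pfx_props k by auto
  have w: "?w \<in> ext F S (pfx k)" using nxt_props(1) k by simp
  then have w_U: "?w \<in> ext F U (pfx k)" using S_subset_U by (auto simp: ext_iff)
  then have ne: "ext F U (pfx k) \<noteq> {}" by auto
  have c: "?c \<in> ext F U (pfx k)" "lay_key (pfx k) ?c \<le> lay_key (pfx k) ?w"
    using choose'_props[OF _ ne] w_U by auto
  have P_c: "?P = complete' U F (insert ?c (pfx k)) U" using complete'_step[OF _ ne] by simp
  have c_w: "?c \<noteq> ?w" using P_c complete_k complete_Suc pfx_Suc k(1) by auto
  have c_S: "?c \<notin> S"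
  proof
    assume "?c \<in> S"
    then have "lay_key (pfx k) ?w \<le> lay_key (pfx k) ?c"
      using c nxt_props(2)[of k] k by (auto simp: ext_iff)
    then show False using lay_key_eq c c_w by blast
  qed
  have "?c \<in> complete' U F (insert ?c (pfx k)) U"
    using compl_it_superset unfolding complete'_def by blast
  moreover have "?P \<in> F" "pfx k \<subseteq> ?P"
    using compl_it_feasible[OF order_refl pk(1)] compl_it_superset unfolding complete'_def by auto
  ultimately have P: "?P \<in> F" "pfx k \<subseteq> ?P" "?c \<in> ?P" using P_c by auto
  have "insert ?w (insert ?c (pfx k)) \<in> F"
    by (rule commutableD[OF pk(1) P(1)]) (use pk c w w_P P in \<open>auto simp: ext_iff\<close>)
  then have "insert ?c (pfx (Suc k)) \<in> F" using pfx_Suc k(1) by (simp add: insert_commute)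
  then have "?c \<in> ext F U (pfx (Suc k))"
    using c_S c pfx_props[of "Suc k"] k by (auto simp: ext_iff)
  then have "lay_key (pfx k) ?w \<le> lay_key (pfx k) ?c"
    using lay_key_nxt_le_outside[OF k(1) _ k(2) complete_Suc c_S c(1)] by simp
  then show False using lay_key_eq c c_w by blast
qed

lemma choose'_pfx_superset:
  assumes j: "j \<le> card S" and complete_j: "complete' U F (pfx j) U = S"
    and R: "R \<in> F" "pfx j \<subseteq> R" and i: "1 \<le> i" "i < j"
  shows "choose' U F (pfx i) R = nxt i"
proof -
  have R_U: "R \<subseteq> U" using R feasible_subset_U by blast
  have n: "nxt i \<in> ext F S (pfx i)" using nxt_props(1) i j by simp
  have "nxt i \<in> pfx j" using pfx_Suc[OF i(1)] pfx_mono[of "Suc i" j] i by auto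
  then have n_R: "nxt i \<in> ext F R (pfx i)" using n R by (auto simp: ext_iff)
  then have ne: "ext F R (pfx i) \<noteq> {}" by auto
  let ?d = "choose' U F (pfx i) R"
  have d: "?d \<in> ext F R (pfx i)" "lay_key (pfx i) ?d \<le> lay_key (pfx i) (nxt i)"
    using choose'_props[OF R_U ne] n_R by auto
  have "lay_key (pfx i) (nxt i) \<le> lay_key (pfx i) ?d"
  proof (cases "?d \<in> S")
    case True
    then show ?thesis using d nxt_props(2)[of i] i j by (auto simp: ext_iff)
  next
    case False
    have pi: "pfx i \<in> F" "src \<in> pfx i" and pj: "pfx j \<in> F" "pfx j \<subseteq> S"
      using pfx_props i j by auto
    have "insert ?d (pfx j) \<in> F"
      by (rule insert_feasible_lift[of "pfx i" _ _ R])
        (use pi pj pfx_mono[of i j] i d False R in \<open>auto simp: ext_iff\<close>)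
    then have "?d \<in> ext F U (pfx j)" using False pj d R_U by (auto simp: ext_iff)
    moreover have "?d \<in> ext F U (pfx i)" using d R_U by (auto simp: ext_iff)
    ultimately show ?thesis using lay_key_nxt_le_outside[OF i j complete_j False] by simp
  qed
  then show ?thesis using lay_key_eq d by blast
qed

lemma compl_tr_it_pfx:
  assumes k: "Suc k \<le> card S" and complete_Suc: "complete' U F (pfx (Suc k)) U = S"
    and R: "R \<in> F" "pfx (Suc k) \<subseteq> R"
  shows "1 \<le> i \<Longrightarrow> i \<le> k \<Longrightarrow> k - i \<le> n \<Longrightarrow> compl_tr_it U F R (nxt k) n (pfx i) = pfx k"
proof (induction n arbitrary: i)
  case (Suc n)
  have "nxt i \<in> pfx (Suc k)" using pfx_Suc[of i] pfx_mono[of "Suc i" "Suc k"] Suc.prems by auto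
  then have "nxt i \<in> ext F R (pfx i)" using nxt_props(1)[of i] Suc.prems k R by (auto simp: ext_iff)
  then have ne: "ext F R (pfx i) \<noteq> {}" by auto
  have choose: "choose' U F (pfx i) R = nxt i"
    using choose'_pfx_superset[OF k complete_Suc R] Suc.prems by simp
  show ?case
  proof (cases "i = k")
    case False
    have "nxt k \<notin> pfx k" using nxt_props(1)[of k] Suc.prems k by (auto simp: ext_iff)
    moreover have "nxt i \<in> pfx k" using pfx_Suc[of i] pfx_mono[of "Suc i" k] Suc.prems False by auto
    ultimately have "nxt i \<noteq> nxt k" by auto
    then have "compl_tr_it U F R (nxt k) (Suc n) (pfx i) = compl_tr_it U F R (nxt k) n (pfx (Suc i))"
      using ne choose pfx_Suc[of i] Suc.prems by simp
    also have "\<dots> = pfx k" using Suc.IH[of "Suc i"] Suc.prems False by simp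
    finally show ?thesis .
  qed (use ne choose in simp)
qed simp

lemma complete_trunc_pfx:
  assumes k: "1 \<le> k" "Suc k \<le> card S" and complete_Suc: "complete' U F (pfx (Suc k)) U = S"
    and R: "R \<in> F" "pfx (Suc k) \<subseteq> R"
  shows "complete_trunc U F {src} R (nxt k) = pfx k"
proof -
  have "card S \<le> card U" using S_subset_U finite_U card_mono by blast
  then show ?thesis
    using compl_tr_it_pfx[OF k(2) complete_Suc R, of 1 "card U"] k
    unfolding complete_trunc_def by simp
qed

end

theorem mainTheorem8:
  fixes U :: "int set" and F :: "int set set" and P S :: "int set" and w :: int
  assumes "set_system U F"
    and "strongly_accessible F"
    and "commutable F"
    and "maximal F P"
    and "w \<in> U"
    and "maximal F S"
    and "S \<noteq> {}"
    and "\<not> is_root U F S"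
    and "parent' U F S = P"
    and "pi' U F S = w"
  shows "w \<notin> P \<and>
    (\<exists>R\<in>restr F P w. \<exists>s\<in>R \<inter> Zset F. s \<noteq> w \<and>
       S = complete' U F (complete_trunc U F {s} R w \<union> {w}) U)"
proof -
  interpret canonical_order U F S
    using assms by unfold_locales (auto simp: set_system_def)
  define k where "k = canon_j U F S - 1"
  have j: "canon_j U F S = Suc k"
    using canon_j_props(1) \<open>\<not> is_root U F S\<close> unfolding k_def is_root_def by auto
  have k: "1 \<le> k" "Suc k \<le> card S" "complete' U F (pfx (Suc k)) U = S"
    "complete' U F (pfx k) U \<noteq> S"
    using canon_j_props complete_pfx_below_canon_j[of k] \<open>\<not> is_root U F S\<close> j
    unfolding is_root_def by auto
  have w: "w = nxt k"
    using \<open>pi' U F S = w\<close> k(1) j unfolding pi'_def canon_elem_def by simp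
  have P: "P = complete' U F (pfx k) U"
    using \<open>parent' U F S = P\<close> j unfolding parent'_def core'_def by simp
  have w_P: "w \<notin> P" using nxt_notin_complete_pfx k w P by simp
  have pfx_Suc_k: "pfx (Suc k) = insert w (pfx k)" "pfx (Suc k) \<in> F" "src \<in> pfx k" "w \<notin> pfx k"
    using pfx_Suc pfx_props[of k] pfx_props[of "Suc k"] nxt_props(1)[of k] k w by (auto simp: ext_iff)
  moreover have "pfx k \<subseteq> P" using P compl_it_superset unfolding complete'_def by blast
  ultimately obtain R where R: "R \<in> restr F P w" "pfx (Suc k) \<subseteq> R"
    using restr_exists_superset[OF w_P] by (metis insert_mono insertI1)
  then have "complete_trunc U F {src} R w = pfx k"
    using complete_trunc_pfx k w unfolding restr_def by auto
  then have "S = complete' U F (complete_trunc U F {src} R w \<union> {w}) U"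
    using k(3) pfx_Suc_k(1) by simp
  moreover have "src \<in> R \<inter> Zset F" "src \<noteq> w" using R pfx_Suc_k src_props(3) by auto
  ultimately show ?thesis using w_P R(1) by blast
qed

end
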